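(* Consider the data-selling model described in the context, with network $G$, prior precision $z_0>0$ and cost $\gamma>0$. Let $C$ be a contract with common precision $z>0$ whose target set $M(C)$ is not an independent set of $G$. For $i\in M(C)$ let $m_i=|N_i\cap M(C)|$. If $$z>\min_{i\in M(C)}\frac{z_0}{1+m_i},$$ then $C$ is not an optimal contract for the seller.
   Context: Model. There is a finite set of buyers $N=\{1,\dots,n\}$ and an undirected network $G$ on $N$: for $i\neq j$, $g_{ij}=g_{ji}\in\{0,1\}$, with $g_{ij}=1$ iff $i$ and $j$ are linked. $N_i=\{j\neq i: g_{ij}=1\}$ is the set of neighbors of $i$. A state $\theta\sim N(0,1/z_0)$ with $z_0>0$ is unknown to all. A contract $C$ of the seller consists of a target set $M(C)\subseteq N$, a common precision $z>0$, and prices $p_i\ge 0$ for $i\in M(C)$ (buyers outside $M(C)$ get nothing and pay nothing). Each $i\in M(C)$ receives a signal $s_i=\theta+\varepsilon_i$, with $\varepsilon_i\sim N(0,1/z)$ independent of $\theta$ and of each other. Each buyer observes the signals of his neighbors in $M(C)$ (and his own if he is in $M(C)$) and then chooses $a_i$ to maximize $E[-(a_i-\theta)^2]$. With $m_i=|N_i\cap M(C)|$, buyer $i\in M(C)$ gets expected payoff $-\frac{1}{z_0+(m_i+1)z}-p_i$. Buyer $i\in M(C)$ accepts iff $p_i\le \frac{1}{z_0+m_iz}-\frac{1}{z_0+(m_i+1)z}$. A contract is feasible if every $i\in M(C)$ accepts. The seller's profit is $\pi(C)=\sum_{i\in M(C)}p_i-\gamma z$ with $\gamma>0$. An optimal contract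 is a feasible contract maximizing $\pi$. An independent set of $G$ is a set of nodes no two of which are linked. *)

theory Defs
  imports Complex_Main
begin

text \<open>Buyers form a finite set N; the network is a symmetric irreflexive
 relation G on N.  A contract is a triple (M, z, p): target set M, common
 precision z, prices p (only values on M matter).\<close>

definition nbrs :: "'a set \<Rightarrow> ('a \<Rightarrow> 'a \<Rightarrow> bool) \<Rightarrow> 'a \<Rightarrow> 'a set" where
  "nbrs N G i = {j \<in> N. j \<noteq> i \<and> G i j}"

definition mcnt :: "'a set \<Rightarrow> ('a \<Rightarrow> 'a \<Rightarrow> bool) \<Rightarrow> 'a set \<Rightarrow> 'a \<Rightarrow> nat" where
  "mcnt N G M i = card (nbrs N G i \<inter> M)"

definition is_contract :: "'a set \<Rightarrow> 'a set \<Rightarrow> real \<Rightarrow> ('a \<Rightarrow> real) \<Rightarrow> bool" where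
  "is_contract N M z p \<longleftrightarrow> M \<subseteq> N \<and> z > 0 \<and> (\<forall>i\<in>M. p i \<ge> 0)"

definition feasible :: "real \<Rightarrow> 'a set \<Rightarrow> ('a \<Rightarrow> 'a \<Rightarrow> bool) \<Rightarrow> 'a set \<Rightarrow> real \<Rightarrow> ('a \<Rightarrow> real) \<Rightarrow> bool" where
  "feasible z0 N G M z p \<longleftrightarrow> is_contract N M z p \<and>
     (\<forall>i\<in>M. p i \<le> 1 / (z0 + real (mcnt N G M i) * z) - 1 / (z0 + (real (mcnt N G M i) + 1) * z))"

definition profit :: "real \<Rightarrow> 'a set \<Rightarrow> real \<Rightarrow> ('a \<Rightarrow> real) \<Rightarrow> real" where
  "profit \<gamma> M z p = (\<Sum>i\<in>M. p i) - \<gamma> * z"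

definition optimal :: "real \<Rightarrow> real \<Rightarrow> 'a set \<Rightarrow> ('a \<Rightarrow> 'a \<Rightarrow> bool) \<Rightarrow> 'a set \<Rightarrow> real \<Rightarrow> ('a \<Rightarrow> real) \<Rightarrow> bool" where
  "optimal z0 \<gamma> N G M z p \<longleftrightarrow> feasible z0 N G M z p \<and>
     (\<forall>M' z' p'. feasible z0 N G M' z' p' \<longrightarrow> profit \<gamma> M' z' p' \<le> profit \<gamma> M z p)"

definition independent_set :: "('a \<Rightarrow> 'a \<Rightarrow> bool) \<Rightarrow> 'a set \<Rightarrow> bool" where
  "independent_set G S \<longleftrightarrow> (\<forall>i\<in>S. \<forall>j\<in>S. \<not> G i j)"

end

theory Submission
  imports Defs
begin

text \<open>Let \<open>i\<close> be a targeted buyer with the largest number \<open>m\<close> of targeted neighbours; since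
  the target set is not independent, \<open>m \<ge> 1\<close>. Drop \<open>i\<close> from the target set and charge every
  remaining buyer his full willingness to pay. The seller loses at most \<open>i\<close>'s willingness to pay,
  \<open>V(m)\<close>, where \<open>V(k) = 1/(z\<^sub>0 + k z) - 1/(z\<^sub>0 + (k+1) z)\<close>. Each of the \<open>m\<close> neighbours of \<open>i\<close>
  now sees one signal less and pays \<open>V(k - 1) - V(k) \<ge> V(m - 1) - V(m)\<close> more, where
  \<open>k \<le> m\<close> is his neighbour count, because \<open>V\<close> is convex. As \<open>m (V(m-1) - V(m)) > V(m)\<close> exactly
  when \<open>z > z\<^sub>0 / (1 + m)\<close>, the smaller target set is strictly more profitable at the same precision.\<close>

lemma obtain_arg_max_if_finite:
  fixes f :: "'a \<Rightarrow> 'b::linorder"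
  assumes "finite M" "M \<noteq> {}"
  obtains i where "i \<in> M" "\<And>j. j \<in> M \<Longrightarrow> f j \<le> f i"
proof -
  have "Max (f ` M) \<in> f ` M" using assms by simp
  then obtain i where "i \<in> M" and "Max (f ` M) = f i" by blast
  moreover have "f j \<le> Max (f ` M)" if "j \<in> M" for j
    using assms(1) that by simp
  ultimately show ?thesis using that by simp
qed

lemma Min_divide_one_plus_eq:
  fixes f :: "'a \<Rightarrow> nat" and c :: real
  assumes "finite M" "c \<ge> 0" "i \<in> M" "\<And>j. j \<in> M \<Longrightarrow> f j \<le> f i"
  shows "Min ((\<lambda>j. c / (1 + real (f j))) ` M) = c / (1 + real (f i))"
proof (rule Min_eqI)
  fix y assume "y \<in> (\<lambda>j. c / (1 + real (f j))) ` M"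
  then obtain j where "j \<in> M" and "y = c / (1 + real (f j))" by blast
  then show "c / (1 + real (f i)) \<le> y"
    using assms(2,4) by (simp add: frac_le)
qed (use assms(1,3) in auto)

definition marginal_value :: "real \<Rightarrow> real \<Rightarrow> real \<Rightarrow> real" where
  "marginal_value z0 z m = 1 / (z0 + m * z) - 1 / (z0 + (m + 1) * z)"

lemma marginal_value_eq:
  assumes "z0 > 0" "z > 0" "m \<ge> 0"
  shows "marginal_value z0 z m = z / ((z0 + m * z) * (z0 + (m + 1) * z))"
proof -
  have "z0 + m * z > 0" "z0 + (m + 1) * z > 0"
    using assms by (simp_all add: add_pos_nonneg)
  then show ?thesis
    unfolding marginal_value_def by (simp add: field_simps)
qed

lemma marginal_value_nonneg:
  "z0 > 0 \<Longrightarrow> z > 0 \<Longrightarrow> m \<ge> 0 \<Longrightarrow> marginal_value z0 z m \<ge> 0"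
  by (simp add: marginal_value_eq add_pos_nonneg)

lemma marginal_value_decrement:
  assumes "z0 > 0" "z > 0" "k \<ge> 1"
  shows "marginal_value z0 z (k - 1) - marginal_value z0 z k
    = 2 * z\<^sup>2 / ((z0 + (k - 1) * z) * (z0 + k * z) * (z0 + (k + 1) * z))"
proof -
  define A B C where "A = z0 + (k - 1) * z" and "B = z0 + k * z" and "C = z0 + (k + 1) * z"
  have "A > 0" "B > 0" "C > 0"
    using assms by (simp_all add: A_def B_def C_def add_pos_nonneg)
  have "marginal_value z0 z (k - 1) - marginal_value z0 z k = z / (A * B) - z / (B * C)"
    using assms by (simp add: marginal_value_eq A_def B_def C_def)
  also have "\<dots> = z * (C - A) / (A * B * C)"
    using \<open>A > 0\<close> \<open>B > 0\<close> \<open>C > 0\<close> by (simp add: field_simps)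
  also have "C - A = 2 * z"
    by (simp add: A_def C_def algebra_simps)
  finally show ?thesis
    by (simp add: A_def B_def C_def power2_eq_square)
qed

lemma marginal_value_decrement_antimono:
  assumes "z0 > 0" "z > 0" "1 \<le> k" "k \<le> m"
  shows "marginal_value z0 z (m - 1) - marginal_value z0 z m
    \<le> marginal_value z0 z (k - 1) - marginal_value z0 z k"
proof -
  have "z0 + (k - 1) * z > 0" using assms by (simp add: add_pos_nonneg)
  moreover have "(k - 1) * z \<le> (m - 1) * z" "k * z \<le> m * z" "(k + 1) * z \<le> (m + 1) * z"
    using assms by simp_all
  ultimately have "(z0 + (k - 1) * z) * (z0 + k * z) * (z0 + (k + 1) * z)
    \<le> (z0 + (m - 1) * z) * (z0 + m * z) * (z0 + (m + 1) * z)"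
    using assms by (intro mult_mono) auto
  moreover have "(z0 + (k - 1) * z) * (z0 + k * z) * (z0 + (k + 1) * z) > 0"
    using \<open>z0 + (k - 1) * z > 0\<close> assms by (simp add: add_pos_nonneg)
  ultimately show ?thesis
    using assms by (simp add: marginal_value_decrement frac_le)
qed

lemma marginal_value_lt_decrement:
  assumes "z0 > 0" "z > 0" "m \<ge> 1" "z0 < (1 + m) * z"
  shows "marginal_value z0 z m < m * (marginal_value z0 z (m - 1) - marginal_value z0 z m)"
proof -
  define A where "A = z0 + (m - 1) * z"
  have "A > 0" using assms by (simp add: A_def add_pos_nonneg)
  have "A < 2 * m * z" using assms(4) by (simp add: A_def algebra_simps)
  have "marginal_value z0 z m = z * A / (A * (z0 + m * z) * (z0 + (m + 1) * z))"
    using assms \<open>A > 0\<close> by (simp add: marginal_value_eq)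
  also have "\<dots> < 2 * m * z * z / (A * (z0 + m * z) * (z0 + (m + 1) * z))"
    using assms \<open>A > 0\<close> \<open>A < 2 * m * z\<close> by (intro divide_strict_right_mono) (auto simp: add_pos_nonneg)
  also have "\<dots> = m * (marginal_value z0 z (m - 1) - marginal_value z0 z m)"
    using assms by (simp add: marginal_value_decrement A_def power2_eq_square)
  finally show ?thesis .
qed

lemma mem_nbrs_commute:
  assumes "symp G" "i \<in> N" "j \<in> N"
  shows "i \<in> nbrs N G j \<longleftrightarrow> j \<in> nbrs N G i"
  using assms sympD[OF assms(1)] unfolding nbrs_def by blast

lemma mcnt_Diff_singleton:
  "mcnt N G (M - {i}) j = (if i \<in> nbrs N G j \<inter> M then mcnt N G M j - 1 else mcnt N G M j)"
  unfolding mcnt_def by (simp add: Int_Diff[symmetric] card_Diff_singleton_if)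

lemma mcnt_pos:
  assumes "finite N" "j \<in> nbrs N G i \<inter> M"
  shows "mcnt N G M i \<ge> 1"
proof -
  have "finite (nbrs N G i \<inter> M)" using assms(1) by (simp add: nbrs_def)
  moreover have "nbrs N G i \<inter> M \<noteq> {}" using assms(2) by blast
  ultimately show ?thesis
    unfolding mcnt_def by (simp add: Suc_le_eq card_gt_0_iff)
qed

lemma ex_mcnt_pos_if_not_independent:
  assumes "finite N" "M \<subseteq> N" "\<And>i. \<not> G i i" "\<not> independent_set G M"
  shows "\<exists>a\<in>M. mcnt N G M a \<ge> 1"
proof -
  obtain a b where "a \<in> M" "b \<in> M" "G a b"
    using assms(4) unfolding independent_set_def by blast
  then have "b \<in> nbrs N G a \<inter> M"
    using assms(2) assms(3)[of a] unfolding nbrs_def by auto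
  then show ?thesis using \<open>a \<in> M\<close> mcnt_pos[OF assms(1)] by blast
qed

definition full_revenue :: "real \<Rightarrow> 'a set \<Rightarrow> ('a \<Rightarrow> 'a \<Rightarrow> bool) \<Rightarrow> 'a set \<Rightarrow> real \<Rightarrow> real" where
  "full_revenue z0 N G M z = (\<Sum>i\<in>M. marginal_value z0 z (real (mcnt N G M i)))"

lemma feasible_full_prices:
  "M \<subseteq> N \<Longrightarrow> z0 > 0 \<Longrightarrow> z > 0 \<Longrightarrow>
    feasible z0 N G M z (\<lambda>i. marginal_value z0 z (real (mcnt N G M i)))"
  unfolding feasible_def is_contract_def
  by (simp add: marginal_value_nonneg) (simp add: marginal_value_def)

lemma feasible_revenue_le_full_revenue:
  "feasible z0 N G M z p \<Longrightarrow> (\<Sum>i\<in>M. p i) \<le> full_revenue z0 N G M z"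
  unfolding feasible_def full_revenue_def marginal_value_def by (intro sum_mono) simp

lemma not_optimal_if_full_revenue_increases:
  assumes "M' \<subseteq> N" "z0 > 0" "full_revenue z0 N G M z < full_revenue z0 N G M' z"
  shows "\<not> optimal z0 \<gamma> N G M z p"
proof
  assume opt: "optimal z0 \<gamma> N G M z p"
  then have "feasible z0 N G M z p" by (simp add: optimal_def)
  then have "z > 0" and revenue: "(\<Sum>i\<in>M. p i) \<le> full_revenue z0 N G M z"
    by (simp_all add: feasible_def is_contract_def feasible_revenue_le_full_revenue)
  then have "feasible z0 N G M' z (\<lambda>i. marginal_value z0 z (real (mcnt N G M' i)))"
    using assms(1,2) by (simp add: feasible_full_prices)
  then have "full_revenue z0 N G M' z - \<gamma> * z \<le> profit \<gamma> M z p"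
    using opt by (force simp: optimal_def profit_def full_revenue_def)
  then show False
    using revenue assms(3) by (simp add: profit_def)
qed

lemma full_revenue_Diff_max_degree:
  fixes z0 z :: real
  assumes "finite N" "M \<subseteq> N" "symp G" "z0 > 0" "z > 0"
    and "i \<in> M" "\<And>j. j \<in> M \<Longrightarrow> mcnt N G M j \<le> mcnt N G M i"
    and "mcnt N G M i \<ge> 1" "z0 < (1 + mcnt N G M i) * z"
  shows "full_revenue z0 N G M z < full_revenue z0 N G (M - {i}) z"
proof -
  define V where "V = marginal_value z0 z"
  define m where "m = (\<lambda>j. real (mcnt N G M j))"
  define m' where "m' = (\<lambda>j. real (mcnt N G (M - {i}) j))"
  define A where "A = nbrs N G i \<inter> M"
  have "finite M" using assms(1,2) finite_subset by blast
  have "A \<subseteq> M - {i}" by (auto simp: A_def nbrs_def)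
  have unchanged: "m' j = m j" if "j \<in> M - {i} - A" for j
    using that assms(2,3,6) mem_nbrs_commute[of G i N j]
    by (auto simp: m_def m'_def A_def mcnt_Diff_singleton)
  have gain: "V (m i - 1) - V (m i) \<le> V (m' j) - V (m j)" if "j \<in> A" for j
  proof -
    have i_nbr: "i \<in> nbrs N G j \<inter> M"
      using that assms(2,3,6) mem_nbrs_commute[of G i N j] by (auto simp: A_def)
    have "mcnt N G M j \<ge> 1" using assms(1) i_nbr by (rule mcnt_pos)
    then have "1 \<le> m j" "m' j = m j - 1"
      using i_nbr by (simp_all add: m_def m'_def mcnt_Diff_singleton of_nat_diff)
    moreover have "m j \<le> m i" using that assms(7) by (simp add: A_def m_def)
    ultimately show ?thesis
      using assms(4,5) marginal_value_decrement_antimono by (simp add: V_def)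
  qed
  have loss: "V (m i) < m i * (V (m i - 1) - V (m i))"
    using assms(4,5,8,9) marginal_value_lt_decrement by (simp add: V_def m_def)
  have "full_revenue z0 N G M z = V (m i) + (\<Sum>j\<in>M - {i}. V (m j))"
    using \<open>finite M\<close> assms(6) by (simp add: full_revenue_def V_def m_def sum.remove)
  also have "\<dots> < (\<Sum>j\<in>A. V (m i - 1) - V (m i)) + (\<Sum>j\<in>M - {i}. V (m j))"
    using loss by (simp add: m_def A_def mcnt_def)
  also have "\<dots> \<le> (\<Sum>j\<in>A. V (m' j) - V (m j)) + (\<Sum>j\<in>M - {i}. V (m j))"
    using gain by (intro add_right_mono sum_mono)
  also have "(\<Sum>j\<in>A. V (m' j) - V (m j)) = (\<Sum>j\<in>M - {i}. V (m' j) - V (m j))"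
    using \<open>finite M\<close> \<open>A \<subseteq> M - {i}\<close> unchanged by (intro sum.mono_neutral_left) auto
  finally show ?thesis
    by (simp add: full_revenue_def V_def m_def m'_def sum_subtractf)
qed

theorem proposition1:
  fixes N :: "'a set" and G :: "'a \<Rightarrow> 'a \<Rightarrow> bool"
    and z0 \<gamma> z :: real and M :: "'a set" and p :: "'a \<Rightarrow> real"
  assumes "finite N"
    and "\<And>i j. G i j \<Longrightarrow> G j i"
    and "\<And>i. \<not> G i i"
    and "\<And>i j. G i j \<Longrightarrow> i \<in> N \<and> j \<in> N"
    and "z0 > 0" and "\<gamma> > 0"
    and "is_contract N M z p"
    and "\<not> independent_set G M"
    and "z > Min ((\<lambda>i. z0 / (1 + real (mcnt N G M i))) ` M)"
  shows "\<not> optimal z0 \<gamma> N G M z p"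
proof -
  let ?m = "mcnt N G M"
  have "M \<subseteq> N" "z > 0" using assms(7) by (simp_all add: is_contract_def)
  have "finite M" using assms(1) \<open>M \<subseteq> N\<close> finite_subset by blast
  obtain a where "a \<in> M" "?m a \<ge> 1"
    using ex_mcnt_pos_if_not_independent[OF assms(1) \<open>M \<subseteq> N\<close> assms(3,8)] by blast
  then obtain i where "i \<in> M" and max_degree: "\<And>j. j \<in> M \<Longrightarrow> ?m j \<le> ?m i"
    using obtain_arg_max_if_finite[OF \<open>finite M\<close>] by blast
  have "?m i \<ge> 1" using \<open>?m a \<ge> 1\<close> max_degree[OF \<open>a \<in> M\<close>] by simp
  have "Min ((\<lambda>j. z0 / (1 + real (?m j))) ` M) = z0 / (1 + real (?m i))"
    using \<open>finite M\<close> assms(5) \<open>i \<in> M\<close> max_degree by (simp add: Min_divide_one_plus_eq)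
  then have "z > z0 / (1 + real (?m i))"
    using assms(9) by argo
  then have "z0 < (1 + ?m i) * z" by (simp add: pos_divide_less_eq mult.commute)
  then have "full_revenue z0 N G M z < full_revenue z0 N G (M - {i}) z"
    using full_revenue_Diff_max_degree[OF assms(1) \<open>M \<subseteq> N\<close> sympI[of G] assms(5) \<open>z > 0\<close>
        \<open>i \<in> M\<close> max_degree \<open>?m i \<ge> 1\<close>] assms(2) by blast
  moreover have "M - {i} \<subseteq> N" using \<open>M \<subseteq> N\<close> by blast
  ultimately show ?thesis
    using not_optimal_if_full_revenue_increases assms(5) by blast
qed

end
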